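(* Let $n\ge1$ and let $H_n$ be the pyrene system with $n$ pyrene fragments. Then (1) $f(H_n)=n$; (2) $F(H_n)=2n$; (3) $\mathrm{Spec}_f(H_n)=[n,2n]$, i.e. the set of forcing numbers of perfect matchings of $H_n$ is exactly $\{n,n+1,\dots,2n\}$.
   Context: Pyrene system: draw the hexagonal lattice so that every hexagon has two vertical sides; horizontally adjacent hexagons then share a vertical edge. For $n\ge1$, $H_n$ is the hexagonal system (the plane graph formed by the vertices and edges of the following $4n$ hexagons) consisting of a horizontal linear row of $2n$ hexagons $h_{1,1},h_{1,2},\dots,h_{n,1},h_{n,2}$, consecutive ones sharing a vertical edge, together with, for each $i$, a hexagon $s_{i,1}$ directly above and a hexagon $s_{i,2}$ directly below the common edge of $h_{i,1}$ and $h_{i,2}$ (each sharing an edge with both $h_{i,1}$ and $h_{i,2}$). For a perfect matching $M$ of $G$, a forcing set is a subset $S\subseteq M$ contained in no other perfect matching of $G$, and the forcing number $f(G,M)$ is the minimum size of a forcing set. $f(G)$ and $F(G)$ denote the minimum and maximum of $f(G,M)$ over all perfect matchings $M$ of $G$, and $\mathrm{Spec}_f(G)$ is the set of values $f(G,M)$ over all perfect matchings $M$. *)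

theory Defs
  imports Main
begin

definition perfect_matching :: "'a set \<Rightarrow> 'a set set \<Rightarrow> 'a set set \<Rightarrow> bool" where
  "perfect_matching V E M \<longleftrightarrow> M \<subseteq> E \<and> (\<forall>v\<in>V. \<exists>!e. e \<in> M \<and> v \<in> e)"

definition forcing_set :: "'a set \<Rightarrow> 'a set set \<Rightarrow> 'a set set \<Rightarrow> 'a set set \<Rightarrow> bool" where
  "forcing_set V E M S \<longleftrightarrow> S \<subseteq> M \<and>
     (\<forall>M'. perfect_matching V E M' \<and> S \<subseteq> M' \<longrightarrow> M' = M)"

definition forcing_number :: "'a set \<Rightarrow> 'a set set \<Rightarrow> 'a set set \<Rightarrow> nat" where
  "forcing_number V E M = (LEAST k. \<exists>S. forcing_set V E M S \<and> finite S \<and> card S = k)"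

definition forcing_spectrum :: "'a set \<Rightarrow> 'a set set \<Rightarrow> nat set" where
  "forcing_spectrum V E = {forcing_number V E M | M. perfect_matching V E M}"

definition min_forcing_number :: "'a set \<Rightarrow> 'a set set \<Rightarrow> nat" where
  "min_forcing_number V E = Min (forcing_spectrum V E)"

definition max_forcing_number :: "'a set \<Rightarrow> 'a set set \<Rightarrow> nat" where
  "max_forcing_number V E = Max (forcing_spectrum V E)"

text \<open>The hexagon with lower-left corner (x,y) (where x+y is even)
  has vertices (x+a, y+b) for a in {0,1,2}, b in {0,1}; its two vertical sides are
  (x,y)-(x,y+1) and (x+2,y)-(x+2,y+1). Horizontally adjacent hexagons (x,y),(x+2,y) share a
  vertical edge; hexagon (x+1,y+1) lies directly above, and (x+1,y-1) directly below, their
  common vertical edge, sharing an edge with both.\<close>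

definition hex_vertices :: "int \<times> int \<Rightarrow> (int \<times> int) set" where
  "hex_vertices p = (case p of (x, y) \<Rightarrow>
     {(x, y), (x+1, y), (x+2, y), (x, y+1), (x+1, y+1), (x+2, y+1)})"

definition hex_edges :: "int \<times> int \<Rightarrow> (int \<times> int) set set" where
  "hex_edges p = (case p of (x, y) \<Rightarrow>
     {{(x, y), (x+1, y)}, {(x+1, y), (x+2, y)},
      {(x, y+1), (x+1, y+1)}, {(x+1, y+1), (x+2, y+1)},
      {(x, y), (x, y+1)}, {(x+2, y), (x+2, y+1)}})"

text \<open>Pyrene system H_n: row hexagons h_{i,1} = (4i,0), h_{i,2} = (4i+2,0) for i < n
  (i.e. (2k,0) for k < 2n), s_{i,1} = (4i+1,1) above and s_{i,2} = (4i+1,-1) below the common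
  edge x = 4i+2 of h_{i,1} and h_{i,2}.\<close>

definition pyrene_hexagons :: "nat \<Rightarrow> (int \<times> int) set" where
  "pyrene_hexagons n =
     {(2 * int k, 0) | k. k < 2 * n} \<union>
     {(4 * int i + 1, 1) | i. i < n} \<union>
     {(4 * int i + 1, -1) | i. i < n}"

definition pyrene_V :: "nat \<Rightarrow> (int \<times> int) set" where
  "pyrene_V n = (\<Union>h\<in>pyrene_hexagons n. hex_vertices h)"

definition pyrene_E :: "nat \<Rightarrow> (int \<times> int) set set" where
  "pyrene_E n = (\<Union>h\<in>pyrene_hexagons n. hex_edges h)"

end

(*
  Cutting H_n along the vertical lines x = 4i splits it into n fragments: fragment i
  consists of h_{i,1}, h_{i,2}, s_{i,1}, s_{i,2} and lies in the strip 4i <= x <= 4i + 4.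
  Sweeping from left to right, the vertex conditions show that a perfect matching M uses
  both or neither of the two horizontal edges entering a fragment, and that then one of
  h_{i,1}, h_{i,2}, s_{i,2} is M-alternating.  A forcing set meets the M-edges of every
  M-alternating hexagon, and those chosen in different fragments are disjoint, so
  f(H_n, M) >= n.  The same sweep shows that the M-edges at the two vertices (4i + 1, 0)
  and (4i + 2, 1) of every fragment determine M, so f(H_n, M) <= 2n.  Finally, the perfect
  matching in which the first j fragments have both pendant hexagons M-alternating and the
  others have h_{i,2} M-alternating contains 2j + (n - j) disjoint alternating hexagons and
  has a forcing set of that size, so its forcing number is n + j.
*)

theory Submission
  imports Defs "HOL-Library.Disjoint_Sets"
begin

section \<open>Perfect matchings and forcing sets\<close>

lemma perfect_matching_edge_unique:
  assumes "perfect_matching V E M" "v \<in> V" "e \<in> M" "v \<in> e" "e' \<in> M" "v \<in> e'"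
  shows "e' = e"
  using assms unfolding perfect_matching_def by blast

lemma perfect_matching_subset_eq:
  assumes pm: "perfect_matching V E M" and pm': "perfect_matching V E M'" and "M \<subseteq> M'"
    and "\<Union>E \<subseteq> V" and "{} \<notin> E"
  shows "M' = M"
proof
  show "M' \<subseteq> M"
  proof
    fix e assume "e \<in> M'"
    then have "e \<in> E" using pm' unfolding perfect_matching_def by blast
    then obtain v where v: "v \<in> e" "v \<in> V" using assms(4,5) by (metis UnionI all_not_in_conv subsetD)
    then obtain f where "f \<in> M" "v \<in> f" using pm unfolding perfect_matching_def by blast
    with \<open>e \<in> M'\<close> v \<open>M \<subseteq> M'\<close> have "f = e" using perfect_matching_edge_unique[OF pm'] by blast
    with \<open>f \<in> M\<close> show "e \<in> M" by simp
  qed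
qed fact

lemma forcing_set_self:
  "perfect_matching V E M \<Longrightarrow> \<Union>E \<subseteq> V \<Longrightarrow> {} \<notin> E \<Longrightarrow> forcing_set V E M M"
  unfolding forcing_set_def using perfect_matching_subset_eq by blast

lemma forcing_number_le_card:
  "forcing_set V E M S \<Longrightarrow> finite S \<Longrightarrow> forcing_number V E M \<le> card S"
  unfolding forcing_number_def by (rule Least_le) blast

lemma forcing_number_attained:
  assumes "forcing_set V E M S" "finite S"
  obtains S' where "forcing_set V E M S'" "finite S'" "card S' = forcing_number V E M"
proof -
  have "\<exists>k. \<exists>S. forcing_set V E M S \<and> finite S \<and> card S = k" using assms by blast
  then have "\<exists>S. forcing_set V E M S \<and> finite S \<and> card S = forcing_number V E M"
    unfolding forcing_number_def by (rule LeastI_ex)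
  then show thesis using that by blast
qed

(* For instance the M-edges of an M-alternating cycle, see switchable_by_exchange. *)
definition switchable :: "'a set \<Rightarrow> 'a set set \<Rightarrow> 'a set set \<Rightarrow> 'a set set \<Rightarrow> bool" where
  "switchable V E M A \<longleftrightarrow> A \<subseteq> M \<and> (\<exists>M'. perfect_matching V E M' \<and> M' \<noteq> M \<and> M - A \<subseteq> M')"

lemma forcing_set_meets_switchable:
  "forcing_set V E M S \<Longrightarrow> switchable V E M A \<Longrightarrow> S \<inter> A \<noteq> {}"
  unfolding forcing_set_def switchable_def by blast

lemma card_le_forcing_number:
  assumes "forcing_set V E M S" "finite S" "finite I"
    and "\<And>t. t \<in> I \<Longrightarrow> switchable V E M (A t)" and "disjoint_family_on A I"
  shows "card I \<le> forcing_number V E M"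
proof -
  obtain S' where S': "forcing_set V E M S'" "finite S'" "card S' = forcing_number V E M"
    using forcing_number_attained assms(1,2) .
  have "\<forall>t\<in>I. \<exists>e. e \<in> S' \<inter> A t"
    using forcing_set_meets_switchable[OF S'(1)] assms(4) by blast
  then obtain g where g: "\<forall>t\<in>I. g t \<in> S' \<inter> A t" by (rule bchoice[THEN exE])
  have "inj_on g I"
  proof (rule inj_onI)
    fix s t assume "s \<in> I" "t \<in> I" "g s = g t"
    then have "g s \<in> A s \<inter> A t" using g by auto
    with \<open>s \<in> I\<close> \<open>t \<in> I\<close> show "s = t"
      using assms(5) unfolding disjoint_family_on_def by blast
  qed
  moreover have "g ` I \<subseteq> S'" using g by blast
  ultimately have "card I \<le> card S'" using S'(2) by (rule card_inj_on_le)
  with S'(3) show ?thesis by simp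
qed

lemma card_matched_edges_le:
  assumes pm: "perfect_matching V E M" and "P \<subseteq> V" "finite P"
  shows "card {e \<in> M. \<exists>v\<in>P. v \<in> e} \<le> card P"
proof -
  have one: "card {e \<in> M. v \<in> e} = 1" if "v \<in> P" for v
  proof -
    have "v \<in> V" using that \<open>P \<subseteq> V\<close> by blast
    then obtain e where "e \<in> M" "v \<in> e" using pm unfolding perfect_matching_def by blast
    then have "{e \<in> M. v \<in> e} = {e}" using perfect_matching_edge_unique[OF pm \<open>v \<in> V\<close>] by blast
    then show ?thesis by simp
  qed
  have "{e \<in> M. \<exists>v\<in>P. v \<in> e} = (\<Union>v\<in>P. {e \<in> M. v \<in> e})" by blast
  also have "card \<dots> \<le> (\<Sum>v\<in>P. card {e \<in> M. v \<in> e})" by (rule card_UN_le) fact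
  also have "\<dots> = card P" using one by simp
  finally show ?thesis .
qed

lemma perfect_matching_exchange:
  assumes pm: "perfect_matching V E M" and "\<Union>E \<subseteq> V" and "C \<subseteq> M" "D \<subseteq> E" "\<Union>D = \<Union>C"
    and "disjoint D"
  shows "perfect_matching V E (M - C \<union> D)"
  unfolding perfect_matching_def
proof (intro conjI ballI)
  show "M - C \<union> D \<subseteq> E" using pm \<open>D \<subseteq> E\<close> unfolding perfect_matching_def by blast
next
  fix v assume "v \<in> V"
  have in_C: "e \<in> C" if "e \<in> M" "v \<in> e" "v \<in> \<Union>C" for e
  proof -
    obtain c where "c \<in> C" "v \<in> c" using \<open>v \<in> \<Union>C\<close> by blast
    then have "c = e" using perfect_matching_edge_unique[OF pm \<open>v \<in> V\<close>] that \<open>C \<subseteq> M\<close> by blast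
    with \<open>c \<in> C\<close> show ?thesis by simp
  qed
  show "\<exists>!e. e \<in> M - C \<union> D \<and> v \<in> e"
  proof (cases "v \<in> \<Union>D")
    case True
    then obtain d where d: "d \<in> D" "v \<in> d" by blast
    show ?thesis
    proof (rule ex1I)
      show "d \<in> M - C \<union> D \<and> v \<in> d" using d by blast
    next
      fix e assume e: "e \<in> M - C \<union> D \<and> v \<in> e"
      then have "e \<in> D" using in_C True \<open>\<Union>D = \<Union>C\<close> by blast
      with d e \<open>disjoint D\<close> show "e = d" unfolding pairwise_def disjnt_def by blast
    qed
  next
    case False
    obtain m where m: "m \<in> M" "v \<in> m" using pm \<open>v \<in> V\<close> unfolding perfect_matching_def by blast
    show ?thesis
    proof (rule ex1I)
      show "m \<in> M - C \<union> D \<and> v \<in> m" using m False \<open>\<Union>D = \<Union>C\<close> by blast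
    next
      fix e assume "e \<in> M - C \<union> D \<and> v \<in> e"
      then have "e \<in> M" "v \<in> e" using False by blast+
      then show "e = m" using perfect_matching_edge_unique[OF pm \<open>v \<in> V\<close> m] by blast
    qed
  qed
qed

lemma switchable_by_exchange:
  assumes "perfect_matching V E M" "\<Union>E \<subseteq> V" "C \<subseteq> M" "C \<noteq> {}" "D \<subseteq> E" "C \<inter> D = {}"
    "\<Union>D = \<Union>C" "disjoint D"
  shows "switchable V E M C"
proof -
  have "M - C \<union> D \<noteq> M" using assms(3,4,6) by blast
  then show ?thesis
    unfolding switchable_def using perfect_matching_exchange[OF assms(1,2,3,5,7,8)] assms(3) by blast
qed

section \<open>Perfect matchings in the hexagonal lattice\<close>

definition hedge :: "int \<Rightarrow> int \<Rightarrow> (int \<times> int) set" where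
  "hedge x y = {(x, y), (x + 1, y)}"

definition vedge :: "int \<Rightarrow> int \<Rightarrow> (int \<times> int) set" where
  "vedge x y = {(x, y), (x, y + 1)}"

lemma hedge_eq_iff [simp]: "hedge x y = hedge x' y' \<longleftrightarrow> x = x' \<and> y = y'"
  unfolding hedge_def by (auto simp: doubleton_eq_iff)

lemma vedge_eq_iff [simp]: "vedge x y = vedge x' y' \<longleftrightarrow> x = x' \<and> y = y'"
  unfolding vedge_def by (auto simp: doubleton_eq_iff)

lemma hedge_neq_vedge [simp]: "hedge x y \<noteq> vedge x' y'" "vedge x' y' \<noteq> hedge x y"
  unfolding hedge_def vedge_def by (auto simp: doubleton_eq_iff)

lemma mem_hedge [simp]: "v \<in> hedge x y \<longleftrightarrow> v = (x, y) \<or> v = (x + 1, y)"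
  unfolding hedge_def by simp

lemma mem_vedge [simp]: "v \<in> vedge x y \<longleftrightarrow> v = (x, y) \<or> v = (x, y + 1)"
  unfolding vedge_def by simp

definition hex_even_edges :: "int \<times> int \<Rightarrow> (int \<times> int) set set" where
  "hex_even_edges h = (case h of (x, y) \<Rightarrow> {hedge x y, vedge (x + 2) y, hedge x (y + 1)})"

definition hex_odd_edges :: "int \<times> int \<Rightarrow> (int \<times> int) set set" where
  "hex_odd_edges h = (case h of (x, y) \<Rightarrow> {hedge (x + 1) y, hedge (x + 1) (y + 1), vedge x y})"

lemma hex_edges_lattice:
  "hex_edges (x, y) = {hedge x y, hedge (x + 1) y, hedge x (y + 1), hedge (x + 1) (y + 1), vedge x y, vedge (x + 2) y}"
  unfolding hex_edges_def hedge_def vedge_def by (simp add: add.assoc)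

lemma hex_edges_eq: "hex_edges h = hex_even_edges h \<union> hex_odd_edges h"
  by (cases h) (auto simp: hex_edges_lattice hex_even_edges_def hex_odd_edges_def)

lemma hexagon_switchable:
  assumes "perfect_matching V E M" "\<Union>E \<subseteq> V" "hex_edges h \<subseteq> E"
  shows "hex_even_edges h \<subseteq> M \<Longrightarrow> switchable V E M (hex_even_edges h)"
    and "hex_odd_edges h \<subseteq> M \<Longrightarrow> switchable V E M (hex_odd_edges h)"
proof -
  obtain x y where h: "h = (x, y)" by fastforce
  have union: "\<Union>(hex_odd_edges h) = \<Union>(hex_even_edges h)"
    unfolding h hex_even_edges_def hex_odd_edges_def hedge_def vedge_def by auto
  have disj: "hex_even_edges h \<inter> hex_odd_edges h = {}" "hex_odd_edges h \<inter> hex_even_edges h = {}"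
    unfolding h hex_even_edges_def hex_odd_edges_def by auto
  have nonempty: "hex_even_edges h \<noteq> {}" "hex_odd_edges h \<noteq> {}"
    unfolding h hex_even_edges_def hex_odd_edges_def by auto
  have "disjoint (hex_even_edges h)" "disjoint (hex_odd_edges h)"
    unfolding h hex_even_edges_def hex_odd_edges_def hedge_def vedge_def
    by (auto simp: pairwise_insert disjnt_def)
  note odd_disjoint = \<open>disjoint (hex_odd_edges h)\<close> and even_disjoint = \<open>disjoint (hex_even_edges h)\<close>
  have "hex_even_edges h \<subseteq> E" "hex_odd_edges h \<subseteq> E" using assms(3) unfolding hex_edges_eq by auto
  then show "hex_even_edges h \<subseteq> M \<Longrightarrow> switchable V E M (hex_even_edges h)"
    and "hex_odd_edges h \<subseteq> M \<Longrightarrow> switchable V E M (hex_odd_edges h)"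
    using switchable_by_exchange[OF assms(1,2) _ nonempty(1) _ disj(1) union odd_disjoint]
      switchable_by_exchange[OF assms(1,2) _ nonempty(2) _ disj(2) union[symmetric] even_disjoint]
    by blast+
qed

fun exactly_one :: "bool list \<Rightarrow> bool" where
  "exactly_one [] \<longleftrightarrow> False"
| "exactly_one (b # bs) \<longleftrightarrow> (b \<and> \<not> list_ex id bs) \<or> (\<not> b \<and> exactly_one bs)"

lemma exactly_one_map_iff:
  "distinct xs \<Longrightarrow> exactly_one (map P xs) \<longleftrightarrow> (\<exists>!x. x \<in> set xs \<and> P x)"
proof (induction xs)
  case (Cons a xs)
  then show ?case by (auto simp: list_ex_iff)
qed (simp add: Ex1_def)

definition lattice_star :: "int \<times> int \<Rightarrow> (int \<times> int) set list" where
  "lattice_star v = (case v of (x, y) \<Rightarrow> [hedge (x - 1) y, hedge x y, vedge x (y - 1), vedge x y])"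

lemma perfect_matching_lattice_iff:
  assumes lattice: "\<And>e. e \<in> E \<Longrightarrow> \<exists>x y. e = hedge x y \<or> e = vedge x y"
  shows "perfect_matching V E M \<longleftrightarrow>
    M \<subseteq> E \<and> (\<forall>v\<in>V. exactly_one (map (\<lambda>e. e \<in> M) (lattice_star v)))"
proof -
  have star: "v \<in> e \<longleftrightarrow> e \<in> set (lattice_star v)" if e: "e \<in> E" for e v
  proof -
    obtain x y where "e = hedge x y \<or> e = vedge x y" using lattice[OF e] by blast
    then show ?thesis by (cases v) (elim disjE; simp add: lattice_star_def; presburger)
  qed
  have distinct: "distinct (lattice_star v)" for v
    by (cases v) (simp add: lattice_star_def)
  have "(\<exists>!e. e \<in> M \<and> v \<in> e) \<longleftrightarrow> exactly_one (map (\<lambda>e. e \<in> M) (lattice_star v))"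
    if "M \<subseteq> E" for v
  proof -
    have "e \<in> M \<and> v \<in> e \<longleftrightarrow> e \<in> set (lattice_star v) \<and> e \<in> M" for e
      using star that by blast
    then show ?thesis by (simp add: exactly_one_map_iff[OF distinct])
  qed
  then show ?thesis unfolding perfect_matching_def by blast
qed

section \<open>The fragments of the pyrene system\<close>

definition fragment_hexagons :: "int \<Rightarrow> (int \<times> int) set" where
  "fragment_hexagons c = {(c, 0), (c + 2, 0), (c + 1, 1), (c + 1, -1)}"

(* Fragment i has left column x = c = 4i.  It owns the vertical edge on its left column;
   the one on its right column belongs to the next fragment, or to none for the last. *)
definition fragment_edges :: "int \<Rightarrow> (int \<times> int) set set" where
  "fragment_edges c = {vedge c 0, hedge c 0, hedge c 1,
     hedge (c + 1) (-1), hedge (c + 2) (-1), vedge (c + 1) (-1), vedge (c + 3) (-1),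
     hedge (c + 1) 0, hedge (c + 2) 0, hedge (c + 3) 0, vedge (c + 2) 0,
     hedge (c + 1) 1, hedge (c + 2) 1, hedge (c + 3) 1, vedge (c + 1) 1, vedge (c + 3) 1,
     hedge (c + 1) 2, hedge (c + 2) 2}"

definition fragment_vertices :: "int \<Rightarrow> (int \<times> int) set" where
  "fragment_vertices c = {(c, 0), (c, 1)} \<union> {c + 1, c + 2, c + 3} \<times> {-1, 0, 1, 2}"

lemma pyrene_hexagons_eq: "pyrene_hexagons n = (\<Union>i<n. fragment_hexagons (4 * int i))"
proof -
  have row: "(\<exists>k<2 * n. x = 2 * int k) \<longleftrightarrow> (\<exists>i<n. x = 4 * int i \<or> x = 4 * int i + 2)" for x
    by presburger
  have "{(2 * int k, 0) | k. k < 2 * n} = (\<Union>i<n. {(4 * int i, 0), (4 * int i + 2, 0)})"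
    using row by blast
  then show ?thesis
    unfolding pyrene_hexagons_def fragment_hexagons_def by auto
qed

lemma fragment_hexagons_edges:
  "(\<Union>h\<in>fragment_hexagons c. hex_edges h) = insert (vedge (c + 4) 0) (fragment_edges c)"
  unfolding fragment_hexagons_def hex_edges_eq hex_even_edges_def hex_odd_edges_def fragment_edges_def
  by (auto simp: algebra_simps)

lemma fragment_hexagons_vertices:
  "(\<Union>h\<in>fragment_hexagons c. hex_vertices h) = {(c + 4, 0), (c + 4, 1)} \<union> fragment_vertices c"
  unfolding fragment_hexagons_def hex_vertices_def fragment_vertices_def
  by (auto simp: algebra_simps)

lemma pyrene_E_eq:
  "pyrene_E n = (\<Union>i<n. insert (vedge (4 * int i + 4) 0) (fragment_edges (4 * int i)))"
  unfolding pyrene_E_def pyrene_hexagons_eq fragment_hexagons_edges[symmetric] by blast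

lemma pyrene_V_eq:
  "pyrene_V n = (\<Union>i<n. {(4 * int i + 4, 0), (4 * int i + 4, 1)} \<union> fragment_vertices (4 * int i))"
  unfolding pyrene_V_def pyrene_hexagons_eq fragment_hexagons_vertices[symmetric] by blast

lemma hedge_in_pyrene_E [simp]:
  "hedge x y \<in> pyrene_E n \<longleftrightarrow>
    0 \<le> x \<and> x < 4 * int n \<and> (y = 0 \<or> y = 1 \<or> (y = -1 \<or> y = 2) \<and> (x mod 4 = 1 \<or> x mod 4 = 2))"
proof -
  have row: "(\<exists>i<n. x = 4 * int i \<or> x = 4 * int i + 1 \<or> x = 4 * int i + 2 \<or> x = 4 * int i + 3)
      \<longleftrightarrow> 0 \<le> x \<and> x < 4 * int n"
    by presburger
  have pendant: "(\<exists>i<n. x = 4 * int i + 1 \<or> x = 4 * int i + 2)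
      \<longleftrightarrow> 0 \<le> x \<and> x < 4 * int n \<and> (x mod 4 = 1 \<or> x mod 4 = 2)"
    by presburger
  have "hedge x y \<in> pyrene_E n \<longleftrightarrow>
      (y = 0 \<or> y = 1) \<and> (\<exists>i<n. x = 4 * int i \<or> x = 4 * int i + 1 \<or> x = 4 * int i + 2 \<or> x = 4 * int i + 3) \<or>
      (y = -1 \<or> y = 2) \<and> (\<exists>i<n. x = 4 * int i + 1 \<or> x = 4 * int i + 2)"
    unfolding pyrene_E_eq fragment_edges_def by auto
  then show ?thesis unfolding row pendant by auto
qed

lemma vedge_in_pyrene_E [simp]:
  "vedge x y \<in> pyrene_E n \<longleftrightarrow>
    0 \<le> x \<and> (y = 0 \<and> even x \<and> x \<le> 4 * int n \<and> 0 < n \<or> (y = -1 \<or> y = 1) \<and> odd x \<and> x < 4 * int n)"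
proof -
  have column: "(\<exists>i<n. x = 4 * int i \<or> x = 4 * int i + 2 \<or> x = 4 * int i + 4)
      \<longleftrightarrow> 0 \<le> x \<and> even x \<and> x \<le> 4 * int n \<and> 0 < n"
    by presburger
  have pendant: "(\<exists>i<n. x = 4 * int i + 1 \<or> x = 4 * int i + 3) \<longleftrightarrow> 0 \<le> x \<and> odd x \<and> x < 4 * int n"
    by presburger
  have "vedge x y \<in> pyrene_E n \<longleftrightarrow>
      y = 0 \<and> (\<exists>i<n. x = 4 * int i \<or> x = 4 * int i + 2 \<or> x = 4 * int i + 4) \<or>
      (y = -1 \<or> y = 1) \<and> (\<exists>i<n. x = 4 * int i + 1 \<or> x = 4 * int i + 3)"
    unfolding pyrene_E_eq fragment_edges_def by auto
  then show ?thesis unfolding column pendant by auto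
qed

lemma pyrene_E_lattice: "e \<in> pyrene_E n \<Longrightarrow> \<exists>x y. e = hedge x y \<or> e = vedge x y"
  unfolding pyrene_E_eq fragment_edges_def by auto

lemma pyrene_E_subset_V: "\<Union>(pyrene_E n) \<subseteq> pyrene_V n"
  unfolding pyrene_E_def pyrene_V_def hex_edges_def hex_vertices_def by (auto split: prod.splits)

lemma empty_notin_pyrene_E: "{} \<notin> pyrene_E n"
  using pyrene_E_lattice by (metis empty_iff mem_hedge mem_vedge)

lemma finite_pyrene_E: "finite (pyrene_E n)"
  unfolding pyrene_E_eq fragment_edges_def by simp

lemma fragment_vertices_subset_pyrene_V: "i < n \<Longrightarrow> fragment_vertices (4 * int i) \<subseteq> pyrene_V n"
  unfolding pyrene_V_eq by blast

lemma fragment_edges_subset_pyrene_E: "i < n \<Longrightarrow> fragment_edges (4 * int i) \<subseteq> pyrene_E n"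
  unfolding pyrene_E_eq by blast

lemma fragment_edges_in_strip:
  assumes "e \<in> fragment_edges (4 * int i)"
  shows "\<forall>v\<in>e. 4 * int i \<le> fst v \<and> fst v \<le> 4 * int i + 4" "\<exists>v\<in>e. fst v < 4 * int i + 4"
  using assms unfolding fragment_edges_def by (auto simp: Bex_def conj_disj_distribR ex_disj_distrib)

lemma fragment_edges_disjoint:
  assumes "i \<noteq> k"
  shows "fragment_edges (4 * int i) \<inter> fragment_edges (4 * int k) = {}"
proof -
  have left: "e \<notin> fragment_edges (4 * int k)" if ik: "i < k" and e: "e \<in> fragment_edges (4 * int i)" for i k e
  proof
    assume e': "e \<in> fragment_edges (4 * int k)"
    obtain v where "v \<in> e" "fst v < 4 * int i + 4" using fragment_edges_in_strip(2)[OF e] by blast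
    moreover have "4 * int k \<le> fst v" using fragment_edges_in_strip(1)[OF e'] \<open>v \<in> e\<close> by blast
    ultimately show False using ik by linarith
  qed
  from assms consider "i < k" | "k < i" by linarith
  then show ?thesis using left[of i k] left[of k i] by cases blast+
qed

lemma column_edge_notin_fragment_edges:
  assumes "i < k"
  shows "vedge (4 * int k) 0 \<notin> fragment_edges (4 * int i)"
proof
  assume "vedge (4 * int k) 0 \<in> fragment_edges (4 * int i)"
  then obtain v where "v \<in> vedge (4 * int k) 0" "fst v < 4 * int i + 4"
    using fragment_edges_in_strip(2) by blast
  with assms show False by auto
qed

section \<open>Local analysis of a fragment\<close>

(* The perfect matching condition at the 14 vertices of the fragment, lattice edges that
   are not in H_n omitted. *)
definition fragment_constraints :: "(int \<times> int) set set \<Rightarrow> int \<Rightarrow> bool" where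
  "fragment_constraints M c \<longleftrightarrow>
     exactly_one [hedge (c - 1) 0 \<in> M, hedge c 0 \<in> M, vedge c 0 \<in> M] \<and>
     exactly_one [hedge (c - 1) 1 \<in> M, hedge c 1 \<in> M, vedge c 0 \<in> M] \<and>
     exactly_one [hedge (c + 1) (-1) \<in> M, vedge (c + 1) (-1) \<in> M] \<and>
     exactly_one [hedge (c + 1) (-1) \<in> M, hedge (c + 2) (-1) \<in> M] \<and>
     exactly_one [hedge (c + 2) (-1) \<in> M, vedge (c + 3) (-1) \<in> M] \<and>
     exactly_one [hedge c 0 \<in> M, hedge (c + 1) 0 \<in> M, vedge (c + 1) (-1) \<in> M] \<and>
     exactly_one [hedge (c + 1) 0 \<in> M, hedge (c + 2) 0 \<in> M, vedge (c + 2) 0 \<in> M] \<and>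
     exactly_one [hedge (c + 2) 0 \<in> M, hedge (c + 3) 0 \<in> M, vedge (c + 3) (-1) \<in> M] \<and>
     exactly_one [hedge c 1 \<in> M, hedge (c + 1) 1 \<in> M, vedge (c + 1) 1 \<in> M] \<and>
     exactly_one [hedge (c + 1) 1 \<in> M, hedge (c + 2) 1 \<in> M, vedge (c + 2) 0 \<in> M] \<and>
     exactly_one [hedge (c + 2) 1 \<in> M, hedge (c + 3) 1 \<in> M, vedge (c + 3) 1 \<in> M] \<and>
     exactly_one [hedge (c + 1) 2 \<in> M, vedge (c + 1) 1 \<in> M] \<and>
     exactly_one [hedge (c + 1) 2 \<in> M, hedge (c + 2) 2 \<in> M] \<and>
     exactly_one [hedge (c + 2) 2 \<in> M, vedge (c + 3) 1 \<in> M]"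

lemma pyrene_perfect_matching_iff:
  "perfect_matching (pyrene_V n) (pyrene_E n) M \<longleftrightarrow>
    M \<subseteq> pyrene_E n \<and> (\<forall>v\<in>pyrene_V n. exactly_one (map (\<lambda>e. e \<in> M) (lattice_star v)))"
  by (rule perfect_matching_lattice_iff[OF pyrene_E_lattice])

lemma perfect_matching_fragment_constraints:
  assumes pm: "perfect_matching (pyrene_V n) (pyrene_E n) M" and "i < n"
  shows "fragment_constraints M (4 * int i)"
proof -
  have "M \<subseteq> pyrene_E n" and star: "\<forall>v\<in>pyrene_V n. exactly_one (map (\<lambda>e. e \<in> M) (lattice_star v))"
    using pm unfolding pyrene_perfect_matching_iff by blast+
  then have absent: "e \<notin> pyrene_E n \<Longrightarrow> e \<in> M \<longleftrightarrow> False" for e by blast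
  have "\<forall>v\<in>fragment_vertices (4 * int i). exactly_one (map (\<lambda>e. e \<in> M) (lattice_star v))"
    using star fragment_vertices_subset_pyrene_V[OF \<open>i < n\<close>] by blast
  then show ?thesis
    unfolding fragment_constraints_def fragment_vertices_def lattice_star_def
    using \<open>i < n\<close> by (simp add: absent algebra_simps)
qed

lemmas exactly_one_unfold = exactly_one.simps list_ex_Cons_iff list_ex_Nil_iff id_apply

lemma fragment_cut_parity:
  assumes "fragment_constraints M c" "hedge (c - 1) 0 \<in> M \<longleftrightarrow> hedge (c - 1) 1 \<in> M"
  shows "hedge (c + 3) 0 \<in> M \<longleftrightarrow> hedge (c + 3) 1 \<in> M"
  using assms unfolding fragment_constraints_def exactly_one_unfold by sat

lemma fragment_alternating_hexagon:
  assumes "fragment_constraints M c" "hedge (c - 1) 0 \<in> M \<longleftrightarrow> hedge (c - 1) 1 \<in> M"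
  shows "hex_even_edges (c + 1, -1) \<subseteq> M \<or> hex_odd_edges (c + 1, -1) \<subseteq> M \<or>
    hex_even_edges (c, 0) \<subseteq> M \<or> hex_odd_edges (c + 2, 0) \<subseteq> M"
  using assms unfolding fragment_constraints_def exactly_one_unfold
  by (simp add: hex_even_edges_def hex_odd_edges_def add.assoc) sat

lemma fragment_determined:
  assumes "fragment_constraints M c" "fragment_constraints M' c"
    and "hedge (c - 1) 0 \<in> M \<longleftrightarrow> hedge (c - 1) 1 \<in> M"
    and "hedge (c - 1) 0 \<in> M' \<longleftrightarrow> hedge (c - 1) 1 \<in> M'"
    and "hedge (c - 1) 0 \<in> M \<longleftrightarrow> hedge (c - 1) 0 \<in> M'"
    and "{e \<in> M. (c + 1, 0) \<in> e \<or> (c + 2, 1) \<in> e} \<subseteq> M' \<or> hedge (c + 3) 0 \<in> M \<inter> M'"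
  shows "\<forall>e\<in>fragment_edges c. e \<in> M \<longleftrightarrow> e \<in> M'"
proof -
  have "(\<forall>e\<in>{hedge c 0, hedge (c + 1) 0, vedge (c + 1) (-1), hedge (c + 1) 1, hedge (c + 2) 1, vedge (c + 2) 0}.
      e \<in> M \<longrightarrow> e \<in> M') \<or> hedge (c + 3) 0 \<in> M \<and> hedge (c + 3) 0 \<in> M'"
    using assms(6) by auto
  (* satx rather than sat: the naive CNF of the 18 equivalences in the goal is too large. *)
  then show ?thesis
    using assms(1-5) unfolding fragment_constraints_def exactly_one_unfold fragment_edges_def ball_simps(5,7)
    by satx
qed

section \<open>Every forcing number lies between n and 2n\<close>

lemma perfect_matching_cut_parity:
  assumes pm: "perfect_matching (pyrene_V n) (pyrene_E n) M" and "i \<le> n"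
  shows "hedge (4 * int i - 1) 0 \<in> M \<longleftrightarrow> hedge (4 * int i - 1) 1 \<in> M"
  using \<open>i \<le> n\<close>
proof (induction i)
  case 0
  have "M \<subseteq> pyrene_E n" using pm unfolding perfect_matching_def by blast
  then show ?case by auto
next
  case (Suc i)
  then have "hedge (4 * int i + 3) 0 \<in> M \<longleftrightarrow> hedge (4 * int i + 3) 1 \<in> M"
    using fragment_cut_parity[OF perfect_matching_fragment_constraints[OF pm]] by simp
  then show ?case by (simp add: algebra_simps)
qed

lemma fragment_hexagon_edges_subset:
  "i < n \<Longrightarrow> h \<in> fragment_hexagons (4 * int i) \<Longrightarrow> hex_edges h \<subseteq> pyrene_E n"
  unfolding pyrene_E_def pyrene_hexagons_eq by blast

lemma pyrene_forcing_number_ge: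
  assumes pm: "perfect_matching (pyrene_V n) (pyrene_E n) M"
  shows "n \<le> forcing_number (pyrene_V n) (pyrene_E n) M"
proof -
  note switchable = hexagon_switchable[OF pm pyrene_E_subset_V fragment_hexagon_edges_subset]
  have "\<forall>i\<in>{..<n}. \<exists>A. A \<subseteq> fragment_edges (4 * int i) \<and> switchable (pyrene_V n) (pyrene_E n) M A"
  proof
    fix i assume "i \<in> {..<n}"
    then have "i < n" by simp
    let ?c = "4 * int i"
    have "hedge (?c - 1) 0 \<in> M \<longleftrightarrow> hedge (?c - 1) 1 \<in> M"
      using perfect_matching_cut_parity[OF pm] \<open>i < n\<close> by simp
    then have "hex_even_edges (?c + 1, -1) \<subseteq> M \<or> hex_odd_edges (?c + 1, -1) \<subseteq> M \<or>
        hex_even_edges (?c, 0) \<subseteq> M \<or> hex_odd_edges (?c + 2, 0) \<subseteq> M"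
      by (rule fragment_alternating_hexagon[OF perfect_matching_fragment_constraints[OF pm \<open>i < n\<close>]])
    moreover have sub: "hex_even_edges (?c + 1, -1) \<subseteq> fragment_edges ?c" "hex_odd_edges (?c + 1, -1) \<subseteq> fragment_edges ?c"
      "hex_even_edges (?c, 0) \<subseteq> fragment_edges ?c" "hex_odd_edges (?c + 2, 0) \<subseteq> fragment_edges ?c"
      by (simp_all add: hex_even_edges_def hex_odd_edges_def fragment_edges_def add.assoc)
    moreover have hex: "(?c + 1, -1) \<in> fragment_hexagons ?c" "(?c, 0) \<in> fragment_hexagons ?c"
      "(?c + 2, 0) \<in> fragment_hexagons ?c"
      by (simp_all add: fragment_hexagons_def)
    ultimately show "\<exists>A. A \<subseteq> fragment_edges ?c \<and> switchable (pyrene_V n) (pyrene_E n) M A"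
      using switchable(1)[OF \<open>i < n\<close> hex(1)] switchable(2)[OF \<open>i < n\<close> hex(1)]
        switchable(1)[OF \<open>i < n\<close> hex(2)] switchable(2)[OF \<open>i < n\<close> hex(3)] by blast
  qed
  then obtain A where A: "\<forall>i\<in>{..<n}. A i \<subseteq> fragment_edges (4 * int i) \<and> switchable (pyrene_V n) (pyrene_E n) M (A i)"
    by (rule bchoice[THEN exE])
  have "disjoint_family_on A {..<n}"
    unfolding disjoint_family_on_def using A fragment_edges_disjoint by blast
  moreover have "finite M" using pm finite_pyrene_E unfolding perfect_matching_def by (blast intro: finite_subset)
  ultimately have "card {..<n} \<le> forcing_number (pyrene_V n) (pyrene_E n) M"
    using A by (intro card_le_forcing_number[OF forcing_set_self[OF pm pyrene_E_subset_V empty_notin_pyrene_E]]) auto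
  then show ?thesis by simp
qed

lemma pyrene_E_cover:
  assumes "e \<in> pyrene_E n"
  shows "(\<exists>k<n. e \<in> fragment_edges (4 * int k)) \<or> e = vedge (4 * int n) 0"
proof -
  obtain i where i: "i < n" "e \<in> insert (vedge (4 * int (Suc i)) 0) (fragment_edges (4 * int i))"
    using assms unfolding pyrene_E_eq by (auto simp: algebra_simps)
  have "vedge (4 * int (Suc i)) 0 \<in> fragment_edges (4 * int (Suc i))"
    by (simp add: fragment_edges_def)
  with i show ?thesis by (cases "Suc i < n") auto
qed

lemma pyrene_perfect_matchings_eqI:
  assumes pm: "perfect_matching (pyrene_V n) (pyrene_E n) M"
    and pm': "perfect_matching (pyrene_V n) (pyrene_E n) M'"
    and pinned: "\<And>i. i < n \<Longrightarrow> {e \<in> M. (4 * int i + 1, 0) \<in> e \<or> (4 * int i + 2, 1) \<in> e} \<subseteq> M'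
      \<or> hedge (4 * int i + 3) 0 \<in> M \<inter> M'"
  shows "M' = M"
proof -
  have ME: "M \<subseteq> pyrene_E n" "M' \<subseteq> pyrene_E n" using pm pm' unfolding perfect_matching_def by blast+
  have agree: "(\<forall>k<i. \<forall>e\<in>fragment_edges (4 * int k). e \<in> M \<longleftrightarrow> e \<in> M')
      \<and> (hedge (4 * int i - 1) 0 \<in> M \<longleftrightarrow> hedge (4 * int i - 1) 0 \<in> M')" if "i \<le> n" for i
    using that
  proof (induction i)
    case 0
    then show ?case using ME by auto
  next
    case (Suc i)
    then have "i < n" by simp
    have "hedge (4 * int i - 1) 0 \<in> M \<longleftrightarrow> hedge (4 * int i - 1) 0 \<in> M'"
      using Suc by simp
    then have "\<forall>e\<in>fragment_edges (4 * int i). e \<in> M \<longleftrightarrow> e \<in> M'"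
      using fragment_determined[OF perfect_matching_fragment_constraints[OF pm \<open>i < n\<close>]
          perfect_matching_fragment_constraints[OF pm' \<open>i < n\<close>]
          perfect_matching_cut_parity[OF pm] perfect_matching_cut_parity[OF pm'] _ pinned[OF \<open>i < n\<close>]]
        Suc.prems by simp
    moreover have "hedge (4 * int (Suc i) - 1) 0 \<in> fragment_edges (4 * int i)"
      by (simp add: fragment_edges_def algebra_simps)
    ultimately show ?case using Suc \<open>i < n\<close> by (auto simp: less_Suc_eq)
  qed
  have column: "vedge (4 * int n) 0 \<in> M \<longleftrightarrow> vedge (4 * int n) 0 \<in> M'"
  proof (cases "n = 0")
    case True
    then show ?thesis using ME by auto
  next
    case False
    then have "(4 * int n, 0) \<in> pyrene_V n"
      unfolding pyrene_V_eq by (intro UN_I[of "n - 1"]) (auto simp: of_nat_diff)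
    then have "exactly_one (map (\<lambda>e. e \<in> X) (lattice_star (4 * int n, 0)))"
      if "perfect_matching (pyrene_V n) (pyrene_E n) X" for X
      using that unfolding pyrene_perfect_matching_iff by blast
    moreover have "hedge (4 * int n) 0 \<notin> X" "vedge (4 * int n) (-1) \<notin> X" if "X \<subseteq> pyrene_E n" for X
      using that by auto
    ultimately show ?thesis
      using pm pm' ME agree[of n] by (simp add: lattice_star_def) blast
  qed
  show "M' = M" using pyrene_E_cover agree[of n] column ME by blast
qed

lemma pyrene_forcing_number_le:
  assumes pm: "perfect_matching (pyrene_V n) (pyrene_E n) M"
  shows "forcing_number (pyrene_V n) (pyrene_E n) M \<le> 2 * n"
proof -
  let ?A = "(\<lambda>i. (4 * int i + 1, 0 :: int)) ` {..<n}" and ?B = "(\<lambda>i. (4 * int i + 2, 1 :: int)) ` {..<n}"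
  define S where "S = {e \<in> M. \<exists>v\<in>?A \<union> ?B. v \<in> e}"
  have "?A \<union> ?B \<subseteq> pyrene_V n"
    using fragment_vertices_subset_pyrene_V by (fastforce simp: fragment_vertices_def)
  then have "card S \<le> card (?A \<union> ?B)" unfolding S_def by (intro card_matched_edges_le[OF pm]) simp_all
  also have "\<dots> \<le> card ?A + card ?B" by (rule card_Un_le)
  also have "\<dots> \<le> n + n" by (intro add_mono) (metis card_image_le card_lessThan finite_lessThan)+
  finally have "card S \<le> 2 * n" by simp
  moreover have "forcing_set (pyrene_V n) (pyrene_E n) M S"
    unfolding forcing_set_def
  proof (intro conjI allI impI)
    show "S \<subseteq> M" unfolding S_def by blast
    fix M' assume "perfect_matching (pyrene_V n) (pyrene_E n) M' \<and> S \<subseteq> M'"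
    then show "M' = M"
      by (intro pyrene_perfect_matchings_eqI[OF pm]) (auto simp: S_def)
  qed
  moreover have "finite S" using pm finite_pyrene_E unfolding S_def perfect_matching_def
    by (blast intro: finite_subset)
  ultimately show ?thesis using forcing_number_le_card by (meson order_trans)
qed

section \<open>Every value between n and 2n is a forcing number\<close>

(* Fragment i of pyrene_matching n j: for i < j both pendant hexagons are alternating,
   otherwise the row hexagon h_{i,2} is. *)
definition fragment_matching :: "nat \<Rightarrow> nat \<Rightarrow> (int \<times> int) set set" where
  "fragment_matching j i = (let c = 4 * int i in
     if i < j then insert (vedge c 0) (hex_even_edges (c + 1, -1) \<union> hex_even_edges (c + 1, 1))
     else (if i = j then {vedge c 0} else {}) \<union> hex_odd_edges (c + 2, 0)
       \<union> {hedge (c + 2) (-1), vedge (c + 1) (-1), vedge (c + 1) 1, hedge (c + 2) 2})"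

definition pyrene_matching :: "nat \<Rightarrow> nat \<Rightarrow> (int \<times> int) set set" where
  "pyrene_matching n j = (\<Union>i<n. fragment_matching j i) \<union> (if j = n then {vedge (4 * int n) 0} else {})"

lemmas fragment_matching_simps = fragment_matching_def Let_def hex_even_edges_def hex_odd_edges_def

lemma fragment_matching_subset: "fragment_matching j i \<subseteq> fragment_edges (4 * int i)"
  unfolding fragment_matching_simps fragment_edges_def by (auto simp: add.assoc)

lemma fragment_matching_subset_pyrene_matching:
  "i < n \<Longrightarrow> fragment_matching j i \<subseteq> pyrene_matching n j"
  unfolding pyrene_matching_def by blast

lemma pyrene_matching_subset:
  assumes "0 < n"
  shows "pyrene_matching n j \<subseteq> pyrene_E n"
proof -
  have "fragment_matching j i \<subseteq> pyrene_E n" if "i < n" for i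
    using fragment_matching_subset fragment_edges_subset_pyrene_E[OF that] by blast
  moreover have "vedge (4 * int n) 0 \<in> pyrene_E n" using assms by simp
  ultimately show ?thesis unfolding pyrene_matching_def by auto
qed

lemma pyrene_matching_fragment:
  assumes "i < n" "e \<in> fragment_edges (4 * int i)"
  shows "e \<in> pyrene_matching n j \<longleftrightarrow> e \<in> fragment_matching j i"
proof -
  have "e \<notin> fragment_matching j k" if "k \<noteq> i" for k
    using fragment_matching_subset fragment_edges_disjoint[OF that] assms(2) by blast
  then have "e \<in> (\<Union>k<n. fragment_matching j k) \<longleftrightarrow> e \<in> fragment_matching j i"
    using assms(1) by (auto; metis)
  moreover have "e \<noteq> vedge (4 * int n) 0"
    using column_edge_notin_fragment_edges[OF assms(1)] assms(2) by blast
  ultimately show ?thesis unfolding pyrene_matching_def by simp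
qed

lemma column_edge_in_pyrene_matching:
  assumes "k \<le> n" "j \<le> n"
  shows "vedge (4 * int k) 0 \<in> pyrene_matching n j \<longleftrightarrow> k \<le> j"
proof (cases "k < n")
  case True
  then show ?thesis
    by (simp add: pyrene_matching_fragment fragment_edges_def fragment_matching_simps)
next
  case False
  then have "k = n" using assms(1) by simp
  have "vedge (4 * int n) 0 \<notin> fragment_matching j i" if "i < n" for i
    using fragment_matching_subset column_edge_notin_fragment_edges[OF that] by blast
  then show ?thesis unfolding pyrene_matching_def \<open>k = n\<close> using assms(2) by auto
qed

lemma cut_edge_in_pyrene_matching:
  assumes "0 < n" "k \<le> n" "y = 0 \<or> y = 1"
  shows "hedge (4 * int k - 1) y \<in> pyrene_matching n j \<longleftrightarrow> j < k"
proof (cases k)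
  case 0
  have "hedge (- 1) y \<notin> pyrene_E n" by simp
  with 0 show ?thesis using pyrene_matching_subset[OF assms(1), of j] by auto
next
  case (Suc i)
  then have "i < n" "hedge (4 * int k - 1) y = hedge (4 * int i + 3) y"
    using assms(2) by (simp_all add: algebra_simps)
  with assms(3) show ?thesis
    by (auto simp: pyrene_matching_fragment fragment_edges_def fragment_matching_simps Suc)
qed

lemma row_edge_notin_pyrene_matching:
  assumes "0 < n" "k \<le> n" "y = 0 \<or> y = 1"
  shows "hedge (4 * int k) y \<notin> pyrene_matching n j"
proof (cases "k < n")
  case True
  with assms(3) show ?thesis
    by (auto simp: pyrene_matching_fragment fragment_edges_def fragment_matching_simps)
next
  case False
  then have "hedge (4 * int k) y \<notin> pyrene_E n" using assms(2) by simp
  then show ?thesis using pyrene_matching_subset[OF assms(1), of j] by blast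
qed

lemma pyrene_V_cases:
  assumes "v \<in> pyrene_V n"
  obtains (column) k y where "k \<le> n" "y = 0 \<or> y = 1" "v = (4 * int k, y)"
    | (inner) i where "i < n" "v \<in> {4 * int i + 1, 4 * int i + 2, 4 * int i + 3} \<times> {-1, 0, 1, 2}"
proof -
  obtain i where "i < n" "v \<in> {(4 * int (Suc i), 0), (4 * int (Suc i), 1)} \<union> fragment_vertices (4 * int i)"
    using assms unfolding pyrene_V_eq by (auto simp: algebra_simps)
  then show thesis
    unfolding fragment_vertices_def using that(1)[of "Suc i"] that(1)[of i] that(2)[of i] by auto
qed

lemma lattice_star_inner_vertex:
  assumes "x \<in> {4 * int i + 1, 4 * int i + 2, 4 * int i + 3}" "y \<in> {-1, 0, 1, 2}"
  shows "set (lattice_star (x, y)) \<subseteq> fragment_edges (4 * int i) \<union> - pyrene_E n"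
  using assms by (elim insertE emptyE) (simp_all add: lattice_star_def fragment_edges_def algebra_simps)

lemma fragment_matching_inner_vertex:
  assumes "x \<in> {4 * int i + 1, 4 * int i + 2, 4 * int i + 3}" "y \<in> {-1, 0, 1, 2}"
  shows "exactly_one (map (\<lambda>e. e \<in> fragment_matching j i) (lattice_star (x, y)))"
  using assms by (elim insertE emptyE) (simp_all add: lattice_star_def fragment_matching_simps algebra_simps)

lemma pyrene_matching_perfect:
  assumes "0 < n" "j \<le> n"
  shows "perfect_matching (pyrene_V n) (pyrene_E n) (pyrene_matching n j)"
  unfolding pyrene_perfect_matching_iff
proof (intro conjI ballI)
  let ?M = "pyrene_matching n j"
  show "?M \<subseteq> pyrene_E n" using pyrene_matching_subset[OF assms(1)] .
  then have absent: "e \<notin> pyrene_E n \<Longrightarrow> e \<in> ?M \<longleftrightarrow> False" for e by blast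
  fix v assume "v \<in> pyrene_V n"
  then show "exactly_one (map (\<lambda>e. e \<in> ?M) (lattice_star v))"
  proof (cases rule: pyrene_V_cases)
    case (column k y)
    then show ?thesis
      using cut_edge_in_pyrene_matching[OF assms(1) column(1,2)] row_edge_notin_pyrene_matching[OF assms(1) column(1,2)]
        column_edge_in_pyrene_matching[OF column(1) assms(2)] assms(1)
      by (auto simp: lattice_star_def absent)
  next
    case (inner i)
    then obtain x y where v: "v = (x, y)" "x \<in> {4 * int i + 1, 4 * int i + 2, 4 * int i + 3}" "y \<in> {-1, 0, 1, 2}"
      by blast
    have "map (\<lambda>e. e \<in> ?M) (lattice_star v) = map (\<lambda>e. e \<in> fragment_matching j i) (lattice_star v)"
      using lattice_star_inner_vertex[OF v(2,3)] pyrene_matching_fragment[OF inner(1)] fragment_matching_subset absent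
      unfolding v(1) by (intro map_cong) blast+
    with fragment_matching_inner_vertex[OF v(2,3)] show ?thesis unfolding v(1) by (simp only:)
  qed
qed

lemma pyrene_matching_forcing_number_ge:
  assumes "0 < n" "j \<le> n"
  shows "n + j \<le> forcing_number (pyrene_V n) (pyrene_E n) (pyrene_matching n j)"
proof -
  let ?M = "pyrene_matching n j"
  note pm = pyrene_matching_perfect[OF assms]
  note switchable = hexagon_switchable[OF pm pyrene_E_subset_V fragment_hexagon_edges_subset]
  define I where "I = {..<j} \<times> {-1, 1} \<union> {j..<n} \<times> {0 :: int}"
  define A where "A t = (case t of (i, y) \<Rightarrow>
      if y = 0 then hex_odd_edges (4 * int i + 2, 0) else hex_even_edges (4 * int i + 1, y))" for t
  have A_sub: "fst t < n \<and> A t \<subseteq> fragment_matching j (fst t)" if "t \<in> I" for t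
    using that assms(2) unfolding I_def A_def by (auto simp: fragment_matching_def Let_def)
  have sw: "switchable (pyrene_V n) (pyrene_E n) ?M (A t)" if tI: "t \<in> I" for t
  proof -
    obtain i y where t: "t = (i, y)" by fastforce
    with A_sub[OF tI] have "i < n" by simp
    with A_sub[OF tI] t have "A t \<subseteq> ?M"
      using fragment_matching_subset_pyrene_matching[OF \<open>i < n\<close>, of j] by auto
    consider "A t = hex_odd_edges (4 * int i + 2, 0)" "(4 * int i + 2, 0) \<in> fragment_hexagons (4 * int i)"
      | "A t = hex_even_edges (4 * int i + 1, y)" "(4 * int i + 1, y) \<in> fragment_hexagons (4 * int i)"
      using tI unfolding t I_def A_def fragment_hexagons_def by fastforce
    then show ?thesis using switchable[OF \<open>i < n\<close>] \<open>A t \<subseteq> ?M\<close> by cases simp_all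
  qed
  have disj: "disjoint_family_on A I"
    unfolding disjoint_family_on_def
  proof (intro ballI impI)
    fix s t assume st: "s \<in> I" "t \<in> I" "s \<noteq> t"
    show "A s \<inter> A t = {}"
    proof (cases "fst s = fst t")
      case True
      then obtain i y y' where "s = (i, y)" "t = (i, y')" "y \<noteq> y'" using st(3) by (metis prod.collapse)
      with st have "y \<in> {-1, 1}" "y' \<in> {-1, 1}" unfolding I_def by auto
      with \<open>y \<noteq> y'\<close> show ?thesis
        unfolding \<open>s = (i, y)\<close> \<open>t = (i, y')\<close> A_def by (auto simp: hex_even_edges_def)
    next
      case False
      with A_sub[OF st(1)] A_sub[OF st(2)] show ?thesis
        using fragment_matching_subset[of j "fst s"] fragment_matching_subset[of j "fst t"]
          fragment_edges_disjoint[OF False] by blast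
    qed
  qed
  have "finite ?M" using pyrene_matching_subset[OF assms(1)] finite_pyrene_E by (rule finite_subset)
  moreover have "finite I" unfolding I_def by simp
  ultimately have "card I \<le> forcing_number (pyrene_V n) (pyrene_E n) ?M"
    using sw disj by (rule card_le_forcing_number[OF forcing_set_self[OF pm pyrene_E_subset_V empty_notin_pyrene_E]])
  moreover have "card I = n + j"
  proof -
    have "card I = card ({..<j} \<times> {-1, 1 :: int}) + card ({j..<n} \<times> {0 :: int})"
      unfolding I_def by (rule card_Un_disjoint) auto
    with assms(2) show ?thesis by (simp add: card_cartesian_product)
  qed
  ultimately show ?thesis by simp
qed

lemma pyrene_matching_forcing_number_le:
  assumes "0 < n" "j \<le> n"
  shows "forcing_number (pyrene_V n) (pyrene_E n) (pyrene_matching n j) \<le> n + j"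
proof -
  let ?M = "pyrene_matching n j"
  note pm = pyrene_matching_perfect[OF assms]
  let ?B = "(\<lambda>i. hedge (4 * int i + 1) 0) ` {..<j}" and ?C = "(\<lambda>i. hedge (4 * int i + 1) 1) ` {..<j}"
    and ?R = "(\<lambda>i. hedge (4 * int i + 3) 0) ` {j..<n}"
  define S where "S = ?B \<union> ?C \<union> ?R"
  have left: "hedge (4 * int i + 1) 0 \<in> ?M" "hedge (4 * int i + 1) 1 \<in> ?M" if "i < j" for i
    using fragment_matching_subset_pyrene_matching[of i n j] that assms(2)
    by (auto simp: fragment_matching_simps)
  have right: "hedge (4 * int i + 3) 0 \<in> ?M" if "j \<le> i" "i < n" for i
    using fragment_matching_subset_pyrene_matching[of i n j] that
    by (auto simp: fragment_matching_simps add.assoc)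
  have "card S \<le> card ?B + card ?C + card ?R"
    unfolding S_def by (meson add_mono card_Un_le order_trans order_refl)
  also have "\<dots> \<le> j + j + (n - j)"
    by (intro add_mono card_image_le[THEN order_trans]) simp_all
  finally have "card S \<le> n + j" using assms(2) by simp
  moreover have "forcing_set (pyrene_V n) (pyrene_E n) ?M S"
    unfolding forcing_set_def
  proof (intro conjI allI impI)
    show "S \<subseteq> ?M" unfolding S_def using left right by auto
    fix M' assume "perfect_matching (pyrene_V n) (pyrene_E n) M' \<and> S \<subseteq> M'"
    then have pm': "perfect_matching (pyrene_V n) (pyrene_E n) M'" and "S \<subseteq> M'" by blast+
    show "M' = ?M"
    proof (rule pyrene_perfect_matchings_eqI[OF pm pm'])
      fix i assume "i < n"
      show "{e \<in> ?M. (4 * int i + 1, 0) \<in> e \<or> (4 * int i + 2, 1) \<in> e} \<subseteq> M'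
        \<or> hedge (4 * int i + 3) 0 \<in> ?M \<inter> M'"
      proof (cases "i < j")
        case True
        have "(4 * int i + 1, 0) \<in> pyrene_V n" "(4 * int i + 2, 1) \<in> pyrene_V n"
          using fragment_vertices_subset_pyrene_V[OF \<open>i < n\<close>] by (auto simp: fragment_vertices_def)
        note unique = perfect_matching_edge_unique[OF pm]
        have "e = hedge (4 * int i + 1) 0" if "e \<in> ?M" "(4 * int i + 1, 0) \<in> e" for e
          using unique[OF \<open>(4 * int i + 1, 0) \<in> pyrene_V n\<close> left(1)[OF True] _ that] by simp
        moreover have "e = hedge (4 * int i + 1) 1" if "e \<in> ?M" "(4 * int i + 2, 1) \<in> e" for e
          using unique[OF \<open>(4 * int i + 2, 1) \<in> pyrene_V n\<close> left(2)[OF True] _ that] by simp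
        moreover have "hedge (4 * int i + 1) 0 \<in> M'" "hedge (4 * int i + 1) 1 \<in> M'"
          using \<open>S \<subseteq> M'\<close> True unfolding S_def by auto
        ultimately show ?thesis by blast
      next
        case False
        then have "hedge (4 * int i + 3) 0 \<in> ?R" "hedge (4 * int i + 3) 0 \<in> ?M"
          using right \<open>i < n\<close> by simp_all
        then show ?thesis using \<open>S \<subseteq> M'\<close> unfolding S_def by blast
      qed
    qed
  qed
  moreover have "finite S" unfolding S_def by simp
  ultimately show ?thesis by (meson forcing_number_le_card order_trans)
qed

corollary forcing_number_pyrene_matching:
  "0 < n \<Longrightarrow> j \<le> n \<Longrightarrow> forcing_number (pyrene_V n) (pyrene_E n) (pyrene_matching n j) = n + j"
  using pyrene_matching_forcing_number_ge pyrene_matching_forcing_number_le by (metis order_antisym)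

theorem corollary3p3:
  fixes n :: nat
  assumes "n \<ge> 1"
  shows "min_forcing_number (pyrene_V n) (pyrene_E n) = n
       \<and> max_forcing_number (pyrene_V n) (pyrene_E n) = 2 * n
       \<and> forcing_spectrum (pyrene_V n) (pyrene_E n) = {n..2 * n}"
proof -
  have "0 < n" using assms by simp
  have spectrum: "forcing_spectrum (pyrene_V n) (pyrene_E n) = {n..2 * n}"
  proof (intro equalityI subsetI)
    fix k assume "k \<in> forcing_spectrum (pyrene_V n) (pyrene_E n)"
    then show "k \<in> {n..2 * n}"
      unfolding forcing_spectrum_def using pyrene_forcing_number_ge pyrene_forcing_number_le by auto
  next
    fix k assume "k \<in> {n..2 * n}"
    then have "k - n \<le> n" "k = n + (k - n)" by auto
    then show "k \<in> forcing_spectrum (pyrene_V n) (pyrene_E n)"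
      unfolding forcing_spectrum_def
      using pyrene_matching_perfect[OF \<open>0 < n\<close>] forcing_number_pyrene_matching[OF \<open>0 < n\<close>] by force
  qed
  moreover have "min_forcing_number (pyrene_V n) (pyrene_E n) = n"
    unfolding min_forcing_number_def spectrum by (rule Min_eqI) auto
  moreover have "max_forcing_number (pyrene_V n) (pyrene_E n) = 2 * n"
    unfolding max_forcing_number_def spectrum by (rule Max_eqI) auto
  ultimately show ?thesis by blast
qed

end
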